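(* Let $g\ge2$, $\mathcal F$ a canonical fundamental $(8g-4)$-gon, and $\bar A=\overline{PQ}$, i.e. $A_k=P_k$ for odd $k$ and $A_k=Q_k$ for even $k$. Then the partition of $\mathbb S$ into the $8g-4$ arcs $I_k=[P_k,Q_{k+1}]$ ($k$ odd), $I_k=[Q_k,P_{k+1}]$ ($k$ even) is a Markov partition for $f_{\overline{PQ}}$, and the maximal eigenvalue of the associated $(8g-4)\times(8g-4)$ transition matrix is $4g-3+\sqrt{(4g-3)^2-1}$.
   Context: Setup: canonical $(8g-4)$-gon with counterclockwise-labelled sides, pairing $\sigma(k)=4g-k\bmod(8g-4)$ ($k$ odd), $2-k\bmod(8g-4)$ ($k$ even), generators $T_k$ mapping side $k$ to side $\sigma(k)$, $P_k$ and $Q_{k+1}$ the initial/terminal endpoints of the oriented geodesic extending side $k$, order $P_1,Q_1,\dots,P_{8g-4},Q_{8g-4}$ counterclockwise on $\mathbb S$. $f_{\bar A}(x)=T_kx$ for $x\in[A_k,A_{k+1})$. The transition matrix of a partition $\{I_j\}$ has entry $1$ at $(i,j)$ iff $f_{\bar A}(I_i)\supset I_j$, else $0$. *)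

theory Defs
  imports Complex_Main "Jordan_Normal_Form.Char_Poly"
begin

definition Nside :: "nat \<Rightarrow> nat" where
  "Nside g = 8 * g - 4"

text \<open>Regular polygon centred at 0 with all interior angles pi/2; side k (sides labelled
counterclockwise, indices taken mod Nside g) lies on the geodesic (circle orthogonal to the
unit circle) whose endpoints are at the angles alpha k - beta and alpha k + beta.
Adjacent side-geodesics meet at right angles iff sin beta = sqrt 2 * sin (pi / N).\<close>

definition alpha :: "nat \<Rightarrow> int \<Rightarrow> real" where
  "alpha g k = 2 * pi * real_of_int k / real (Nside g)"

definition beta :: "nat \<Rightarrow> real" where
  "beta g = arcsin (sqrt 2 * sin (pi / real (Nside g)))"

text \<open>P k: initial endpoint of the oriented (counterclockwise along the boundary) geodesic
extending side k; Q (k+1): its terminal endpoint.\<close>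

definition Ppt :: "nat \<Rightarrow> int \<Rightarrow> complex" where
  "Ppt g k = cis (alpha g k - beta g)"

definition Qpt :: "nat \<Rightarrow> int \<Rightarrow> complex" where
  "Qpt g k = cis (alpha g (k - 1) + beta g)"

definition sigma :: "nat \<Rightarrow> int \<Rightarrow> int" where
  "sigma g k = (if odd k then (4 * int g - k) mod int (Nside g)
                else (2 - k) mod int (Nside g))"

text \<open>Hyperbolic Moebius map along the real axis, mapping the side-geodesic in direction pi
onto the one in direction 0 (and 0 to cos beta).\<close>

definition mobH :: "real \<Rightarrow> complex \<Rightarrow> complex" where
  "mobH t z = (z + complex_of_real t) / (1 + complex_of_real t * z)"

text \<open>Generator T k: the orientation preserving isometry of the disk mapping side k onto side
sigma k (with T k (P k) = Q (sigma k + 1), T k (Q (k+1)) = P (sigma k)).\<close>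

definition T :: "nat \<Rightarrow> int \<Rightarrow> complex \<Rightarrow> complex" where
  "T g k z = cis (alpha g (sigma g k)) * mobH (cos (beta g)) (cis (pi - alpha g k) * z)"

definition circle :: "complex set" where
  "circle = {z. cmod z = 1}"

definition ccw_angle :: "complex \<Rightarrow> complex \<Rightarrow> real" where
  "ccw_angle a z = (let t = Arg (z / a) in if t < 0 then t + 2 * pi else t)"

definition arc_cc :: "complex \<Rightarrow> complex \<Rightarrow> complex set" where
  "arc_cc a b = {z. cmod z = 1 \<and> ccw_angle a z \<le> ccw_angle a b}"

definition arc_co :: "complex \<Rightarrow> complex \<Rightarrow> complex set" where
  "arc_co a b = {z. cmod z = 1 \<and> ccw_angle a z < ccw_angle a b}"

definition circ_int :: "complex set \<Rightarrow> complex set" where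
  "circ_int S = {z \<in> S. \<exists>e>0. \<forall>w. cmod w = 1 \<and> cmod (w - z) < e \<longrightarrow> w \<in> S}"

definition cl :: "complex set \<Rightarrow> complex set" where
  "cl S = {z. \<forall>e>0. \<exists>w\<in>S. cmod (w - z) < e}"

definition fbar :: "nat \<Rightarrow> (int \<Rightarrow> complex) \<Rightarrow> complex \<Rightarrow> complex" where
  "fbar g A x = T g (THE k. k \<in> {1..int (Nside g)} \<and> x \<in> arc_co (A k) (A (k + 1))) x"

definition Abar_PQ :: "nat \<Rightarrow> int \<Rightarrow> complex" where
  "Abar_PQ g k = (if odd k then Ppt g k else Qpt g k)"

definition Ipart :: "nat \<Rightarrow> int \<Rightarrow> complex set" where
  "Ipart g k = (if odd k then arc_cc (Ppt g k) (Qpt g (k + 1))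
                else arc_cc (Qpt g k) (Ppt g (k + 1)))"

definition markov_partition ::
  "(complex \<Rightarrow> complex) \<Rightarrow> (int \<Rightarrow> complex set) \<Rightarrow> int set \<Rightarrow> bool" where
  "markov_partition f I K \<longleftrightarrow>
     finite K \<and> (\<Union>k\<in>K. I k) = circle \<and>
     (\<forall>i\<in>K. \<forall>j\<in>K. i \<noteq> j \<longrightarrow> circ_int (I i) \<inter> circ_int (I j) = {}) \<and>
     (\<forall>i\<in>K. I i = cl (circ_int (I i)) \<and>
        inj_on f (circ_int (I i)) \<and> continuous_on (circ_int (I i)) f \<and>
        cl (f ` circ_int (I i)) =
          \<Union>{I j | j. j \<in> K \<and> circ_int (I j) \<subseteq> f ` circ_int (I i)})"

text \<open>Transition matrix of the partition I 1, ..., I n (row/column index i-1 for I i):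
entry 1 iff f(I i) contains I j (taken up to endpoints, i.e. on interiors).\<close>
definition trans_mat :: "(complex \<Rightarrow> complex) \<Rightarrow> (int \<Rightarrow> complex set) \<Rightarrow> nat \<Rightarrow> complex mat" where
  "trans_mat f I n = mat n n (\<lambda>(i, j).
     if circ_int (I (int j + 1)) \<subseteq> f ` circ_int (I (int i + 1)) then 1 else 0)"

end

(* Every partition point A k is cis (theta k) for an angle sequence theta that is strictly
   increasing with theta (k + N) = theta k + 2 pi, N = 8g - 4, and the arc I k is
   cis ` [theta k, theta (k + 1)].  On the circle the generator T k is a rotation composed with
   the hyperbolic translation mobH (cos beta), which in the angle coordinate u of cis (pi + u)
   acts by u |-> 2 arctan (K tan (u / 2)) with K = cot (beta / 2) ^ 2.  Because the polygon has
   right angles, sin beta = sqrt 2 sin (pi / N), this map sends beta to pi - beta and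
   2 pi / N - beta to pi - 2 pi / N - beta.  Hence T k maps the interior of I k onto the open arc
   from A (sigma k + 1) to A (sigma k + N) for odd k, and from A (sigma k + 2) to
   A (sigma k + N - 1) for even k: each image is a union of N - 1 resp. N - 3 consecutive arcs,
   which is the Markov property, and every row of the transition matrix is a cyclic window of
   odd length starting at an odd column.  So the positive vector alternating between 4g - 2 and
   sqrt ((4g - 3) ^ 2 - 1) is an eigenvector for lam = 4g - 3 + sqrt ((4g - 3) ^ 2 - 1), and a
   positive eigenvector of a nonnegative matrix belongs to its spectral radius. *)

theory Submission
  imports Defs "HOL-Analysis.Elementary_Metric_Spaces" "HOL-Analysis.Abstract_Topology_2"
begin

section \<open>Arcs of the unit circle\<close>

lemma cis_eq_cis_iff: "cis a = cis b \<longleftrightarrow> (\<exists>m::int. a = b + 2 * pi * m)"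
proof
  assume "cis a = cis b"
  then have "cis (a - b) = 1"
    by (simp add: cis_divide[symmetric])
  then have "cos (a - b) = 1"
    by (simp add: complex_eq_iff)
  then obtain n :: int where "a - b = of_int n * 2 * pi"
    using cos_one_2pi_int by blast
  then show "\<exists>m::int. a = b + 2 * pi * m"
    by (intro exI[of _ n]) (simp add: algebra_simps)
next
  assume "\<exists>m::int. a = b + 2 * pi * m"
  then obtain m :: int where "a = b + 2 * pi * m" by blast
  then show "cis a = cis b"
    by (simp add: cis_mult[symmetric])
qed

lemma cis_add_2pi_multiple [simp]: "cis (a + 2 * pi * of_int m) = cis a"
  using cis_eq_cis_iff by blast

lemma cis_mem_image_iff: "cis a \<in> cis ` S \<longleftrightarrow> (\<exists>m::int. a + 2 * pi * m \<in> S)"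
proof
  assume "cis a \<in> cis ` S"
  then obtain t where "t \<in> S" "cis t = cis a" by auto
  then show "\<exists>m::int. a + 2 * pi * m \<in> S"
    by (metis cis_eq_cis_iff)
qed (metis cis_add_2pi_multiple image_eqI)

lemma image_cis_translate: "cis ` (\<lambda>t. t + 2 * pi * of_int m) ` S = cis ` S"
  by (simp add: image_image)

lemma cis_notin_image_Icc:
  assumes "b - 2 * pi < t" "t < a"
  shows "cis t \<notin> cis ` {a..b}"
proof
  assume "cis t \<in> cis ` {a..b}"
  then obtain m :: int where m: "a \<le> t + 2 * pi * m" "t + 2 * pi * m \<le> b"
    by (auto simp: cis_mem_image_iff)
  show False
  proof (cases "m \<le> 0")
    case True
    then have "2 * pi * m \<le> 0" by (simp add: mult_nonneg_nonpos)
    then show False using m assms by linarith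
  next
    case False
    then have "2 * pi * 1 \<le> 2 * pi * m" by simp
    then show False using m assms by linarith
  qed
qed

(* Also in HOL-Analysis.Complex_Transcendental, not imported here because it brings in
   Finite_Cartesian_Product, whose mat would shadow the matrices of Jordan_Normal_Form. *)
lemma Arg_cis: "-pi < x \<Longrightarrow> x \<le> pi \<Longrightarrow> Arg (cis x) = x"
  by (rule cis_Arg_unique) simp_all

lemma ccw_angle_cis:
  assumes "0 \<le> p" "p < 2 * pi"
  shows "ccw_angle (cis a) (cis (a + p)) = p"
proof (cases "p \<le> pi")
  case True
  then show ?thesis
    using assms by (simp add: ccw_angle_def cis_divide Arg_cis)
next
  case False
  have "cis p = cis (p + 2 * pi * of_int (-1))" by (rule cis_add_2pi_multiple[symmetric])
  then have "Arg (cis p) = p - 2 * pi"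
    using assms False by (simp add: Arg_cis)
  then show ?thesis
    using assms False by (simp add: ccw_angle_def cis_divide)
qed

lemma ccw_angle_polar:
  assumes "cmod z = 1"
  shows "0 \<le> ccw_angle (cis a) z" "ccw_angle (cis a) z < 2 * pi"
    and "cis (a + ccw_angle (cis a) z) = z"
proof -
  define w where "w = z / cis a"
  have "cmod w = 1"
    using assms by (simp add: w_def norm_divide)
  then have "w \<noteq> 0" by auto
  then have "cis (Arg w) = sgn w" by (rule cis_Arg)
  also have "sgn w = w" using \<open>cmod w = 1\<close> by (simp add: sgn_div_norm)
  finally have "cis (Arg w) = w" .
  moreover have "ccw_angle (cis a) z = Arg w \<or> ccw_angle (cis a) z = Arg w + 2 * pi"
    by (simp add: ccw_angle_def w_def Let_def)
  ultimately have "cis (ccw_angle (cis a) z) = w"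
    using cis_add_2pi_multiple[of "Arg w" 1] by auto
  then show "cis (a + ccw_angle (cis a) z) = z"
    by (simp add: cis_mult[symmetric] w_def)
  show "0 \<le> ccw_angle (cis a) z" "ccw_angle (cis a) z < 2 * pi"
    using Arg_bounded[of w] by (auto simp: ccw_angle_def w_def Let_def)
qed

lemma image_cis_interval:
  assumes "x \<le> y" "y - x < 2 * pi"
  shows "cis ` {x..y} = {z. cmod z = 1 \<and> ccw_angle (cis x) z \<le> y - x}"
    and "cis ` {x..<y} = {z. cmod z = 1 \<and> ccw_angle (cis x) z < y - x}"
proof -
  have ccw: "ccw_angle (cis x) (cis t) = t - x" if "x \<le> t" "t < x + 2 * pi" for t
    using ccw_angle_cis[of "t - x" x] that by simp
  have polar: "z = cis (x + ccw_angle (cis x) z)" "0 \<le> ccw_angle (cis x) z" if "cmod z = 1" for z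
    using ccw_angle_polar[OF that, of x] by auto
  show "cis ` {x..y} = {z. cmod z = 1 \<and> ccw_angle (cis x) z \<le> y - x}"
  proof (intro equalityI subsetI)
    fix z assume "z \<in> {z. cmod z = 1 \<and> ccw_angle (cis x) z \<le> y - x}"
    then show "z \<in> cis ` {x..y}"
      using polar[of z] by (intro image_eqI[of _ _ "x + ccw_angle (cis x) z"]) auto
  qed (use assms ccw in auto)
  show "cis ` {x..<y} = {z. cmod z = 1 \<and> ccw_angle (cis x) z < y - x}"
  proof (intro equalityI subsetI)
    fix z assume "z \<in> {z. cmod z = 1 \<and> ccw_angle (cis x) z < y - x}"
    then show "z \<in> cis ` {x..<y}"
      using polar[of z] by (intro image_eqI[of _ _ "x + ccw_angle (cis x) z"]) auto
  qed (use assms ccw in auto)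
qed

lemma arc_cc_cis:
  assumes "x \<le> y" "y - x < 2 * pi"
  shows "arc_cc (cis x) (cis y) = cis ` {x..y}"
  using assms ccw_angle_cis[of "y - x" x] by (simp add: arc_cc_def image_cis_interval)

lemma arc_co_cis:
  assumes "x \<le> y" "y - x < 2 * pi"
  shows "arc_co (cis x) (cis y) = cis ` {x..<y}"
  using assms ccw_angle_cis[of "y - x" x] by (simp add: arc_co_def image_cis_interval)

lemma circle_eq_image_cis: "circle = cis ` {x..x + 2 * pi}"
proof (intro equalityI subsetI)
  fix z assume "z \<in> circle"
  then show "z \<in> cis ` {x..x + 2 * pi}"
    using ccw_angle_polar[of z x]
    by (intro image_eqI[of _ _ "x + ccw_angle (cis x) z"]) (auto simp: circle_def)
qed (auto simp: circle_def)

lemma cl_eq_closure: "cl S = closure S"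
  by (auto simp: cl_def closure_approachable dist_norm)

lemma closure_image_cis_Ioo:
  assumes "x < y"
  shows "closure (cis ` {x<..<y}) = cis ` {x..y}"
proof
  have "closed (cis ` {x..y})"
    by (intro compact_imp_closed compact_continuous_image continuous_intros compact_Icc)
  then show "closure (cis ` {x<..<y}) \<subseteq> cis ` {x..y}"
    by (intro closure_minimal image_mono) auto
  show "cis ` {x..y} \<subseteq> closure (cis ` {x<..<y})"
    using continuous_image_closure_subset[of UNIV cis "{x<..<y}"] assms
    by (simp add: continuous_on_cis)
qed

lemma notin_circ_int_if_limit:
  assumes "F \<noteq> bot" "(f \<longlongrightarrow> z) F" "\<forall>\<^sub>F t in F. cmod (f t) = 1 \<and> f t \<notin> S"
  shows "z \<notin> circ_int S"
proof
  assume "z \<in> circ_int S"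
  then obtain e where "e > 0" and e: "\<And>w. cmod w = 1 \<Longrightarrow> cmod (w - z) < e \<Longrightarrow> w \<in> S"
    by (auto simp: circ_int_def)
  then have "\<forall>\<^sub>F t in F. dist (f t) z < e"
    using assms(2) tendstoD by blast
  with assms(3) have "\<forall>\<^sub>F t in F. False"
    by eventually_elim (use e in \<open>auto simp: dist_norm\<close>)
  then show False
    using assms(1) by (simp add: eventually_False)
qed

lemma endpoints_notin_circ_int_image_cis:
  assumes "x < y" "y - x < 2 * pi"
  shows "cis x \<notin> circ_int (cis ` {x..y})" "cis y \<notin> circ_int (cis ` {x..y})"
proof -
  have lim: "(cis \<longlongrightarrow> cis s) (at s within S)" for s S
    by (intro tendsto_intros)
  have "\<forall>\<^sub>F s in at_left x. s \<in> {y - 2 * pi<..<x}"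
    using assms by (intro eventually_at_left_real) auto
  then have "\<forall>\<^sub>F s in at_left x. cmod (cis s) = 1 \<and> cis s \<notin> cis ` {x..y}"
    by eventually_elim (simp add: cis_notin_image_Icc)
  then show "cis x \<notin> circ_int (cis ` {x..y})"
    by (intro notin_circ_int_if_limit[OF _ lim]) auto
  have "\<forall>\<^sub>F s in at_right y. s \<in> {y<..<x + 2 * pi}"
    using assms by (intro eventually_at_right_real) auto
  then have "\<forall>\<^sub>F s in at_right y. cmod (cis s) = 1 \<and> cis s \<notin> cis ` {x..y}"
  proof eventually_elim
    case (elim s)
    then have "cis (s + 2 * pi * of_int (-1)) \<notin> cis ` {x..y}"
      by (intro cis_notin_image_Icc) auto
    then show ?case by (simp only: cis_add_2pi_multiple norm_cis) simp
  qed
  then show "cis y \<notin> circ_int (cis ` {x..y})"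
    by (intro notin_circ_int_if_limit[OF _ lim]) auto
qed

lemma image_cis_Ioo_subset_circ_int:
  assumes "x < y"
  shows "cis ` {x<..<y} \<subseteq> circ_int (cis ` {x..y})"
proof
  fix z assume "z \<in> cis ` {x<..<y}"
  then obtain t where t: "x < t" "t < y" "z = cis t" by auto
  define C where "C = cis ` {y..x + 2 * pi}"
  have "closed C"
    unfolding C_def by (intro compact_imp_closed compact_continuous_image continuous_intros compact_Icc)
  moreover have "z \<notin> C"
    using cis_notin_image_Icc[of "x + 2 * pi" t y] t by (simp add: C_def)
  ultimately obtain e where "e > 0" and e: "\<And>w. dist w z < e \<Longrightarrow> w \<notin> C"
    using open_dist[of "- C"] by (auto simp: closed_def)
  have "w \<in> cis ` {x..y}" if "cmod w = 1" "cmod (w - z) < e" for w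
  proof -
    have "w \<in> cis ` {x..x + 2 * pi}"
      using that(1) circle_eq_image_cis[of x] unfolding circle_def by blast
    then obtain s where s: "x \<le> s" "s \<le> x + 2 * pi" "w = cis s" by auto
    have "w \<notin> C" using e that(2) by (simp add: dist_norm)
    then have "s < y" using s by (auto simp: C_def)
    then show ?thesis using s by auto
  qed
  then show "z \<in> circ_int (cis ` {x..y})"
    using \<open>e > 0\<close> t by (auto simp: circ_int_def)
qed

lemma circ_int_image_cis_Icc:
  assumes "x < y" "y - x < 2 * pi"
  shows "circ_int (cis ` {x..y}) = cis ` {x<..<y}"
proof
  show "circ_int (cis ` {x..y}) \<subseteq> cis ` {x<..<y}"
  proof
    fix z assume z: "z \<in> circ_int (cis ` {x..y})"
    then obtain t where t: "x \<le> t" "t \<le> y" "z = cis t"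
      by (auto simp: circ_int_def)
    moreover have "t \<noteq> x" "t \<noteq> y"
      using z t endpoints_notin_circ_int_image_cis[OF assms] by auto
    ultimately show "z \<in> cis ` {x<..<y}" by auto
  qed
  show "cis ` {x<..<y} \<subseteq> circ_int (cis ` {x..y})"
    using assms(1) by (rule image_cis_Ioo_subset_circ_int)
qed

section \<open>Partitions of the circle by periodic angle sequences\<close>

text \<open>The \<open>k\<close>-th arc of the partition is \<open>cis ` {\<theta> k .. \<theta> (k + 1)}\<close>.\<close>

locale periodic_angles =
  fixes \<theta> :: "int \<Rightarrow> real" and N :: int
  assumes angle_less_succ: "\<And>k. \<theta> k < \<theta> (k + 1)"
    and angle_period: "\<And>k. \<theta> (k + N) = \<theta> k + 2 * pi"
    and period_ge_2: "N \<ge> 2"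
begin

lemma angle_less: "i < j \<Longrightarrow> \<theta> i < \<theta> j"
proof (induction j rule: int_gr_induct)
  case (step j)
  then show ?case using angle_less_succ[of j] by linarith
qed (rule angle_less_succ)

lemma angle_less_iff: "\<theta> i < \<theta> j \<longleftrightarrow> i < j"
  by (metis angle_less linorder_neqE_linordered_idom order.asym)

lemma angle_le_iff: "\<theta> i \<le> \<theta> j \<longleftrightarrow> i \<le> j"
  by (meson angle_less_iff not_less)

lemma angle_period_multiple: "\<theta> (k + m * N) = \<theta> k + 2 * pi * m"
proof (induction m rule: int_induct[where k = 0])
  case (step1 i)
  then show ?case
    using angle_period[of "k + i * N"] by (simp add: algebra_simps)
next
  case (step2 i)
  then show ?case
    using angle_period[of "k + (i - 1) * N"] by (simp add: algebra_simps)
qed simp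

lemma angle_succ_less: "\<theta> (k + 1) < \<theta> k + 2 * pi"
  using angle_less[of "k + 1" "k + N"] angle_period[of k] period_ge_2 by simp

lemma arc_shift: "cis ` {\<theta> (k + m * N) .. \<theta> (k + m * N + 1)} = cis ` {\<theta> k .. \<theta> (k + 1)}"
  using angle_period_multiple[of k m] angle_period_multiple[of "k + 1" m]
    image_cis_translate[of m "{\<theta> k .. \<theta> (k + 1)}"]
  by (simp add: algebra_simps)

lemma index_representative: "\<exists>j m. j \<in> {1..N} \<and> k = j + m * N"
proof (intro exI conjI)
  have "0 \<le> (k - 1) mod N" "(k - 1) mod N < N"
    using period_ge_2 by simp_all
  then show "(k - 1) mod N + 1 \<in> {1..N}" by simp
  show "k = (k - 1) mod N + 1 + (k - 1) div N * N"
    by (simp add: mult.commute)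
qed

lemma index_congruent_eq:
  assumes "i \<in> {1..N}" "k \<in> {1..N}" "i = k + m * N"
  shows "i = k"
proof (rule ccontr)
  assume "i \<noteq> k"
  then have "1 \<le> m \<or> m \<le> -1" using assms(3) by auto
  then show False
  proof
    assume "1 \<le> m"
    then have "1 * N \<le> m * N" using period_ge_2 by (intro mult_right_mono) auto
    then show False using assms by auto
  next
    assume "m \<le> -1"
    then have "m * N \<le> -1 * N" using period_ge_2 by (intro mult_right_mono) auto
    then show False using assms by auto
  qed
qed

lemma open_arc_meets_arc:
  assumes "\<theta> i < a" "a < \<theta> (i + 1)" "\<theta> k \<le> b" "b < \<theta> (k + 1)" "cis a = cis b"
  shows "\<exists>m. i = k + m * N"
proof -
  obtain m :: int where m: "a = b + 2 * pi * m"
    using assms(5) cis_eq_cis_iff by blast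
  have "\<theta> (k + m * N) < \<theta> (i + 1)" "\<theta> i < \<theta> (k + m * N + 1)"
    using assms m angle_period_multiple[of k m] angle_period_multiple[of "k + 1" m]
    by (simp_all add: algebra_simps)
  then have "i = k + m * N"
    unfolding angle_less_iff by linarith
  then show ?thesis by blast
qed

lemma the_arc_index:
  assumes "i \<in> {1..N}" "x \<in> cis ` {\<theta> i <..< \<theta> (i + 1)}"
  shows "(THE k. k \<in> {1..N} \<and> x \<in> cis ` {\<theta> k ..< \<theta> (k + 1)}) = i"
proof (rule the_equality)
  show "i \<in> {1..N} \<and> x \<in> cis ` {\<theta> i ..< \<theta> (i + 1)}"
    using assms by auto
next
  fix k assume k: "k \<in> {1..N} \<and> x \<in> cis ` {\<theta> k ..< \<theta> (k + 1)}"
  then obtain b where "\<theta> k \<le> b" "b < \<theta> (k + 1)" "x = cis b" by auto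
  moreover obtain a where "\<theta> i < a" "a < \<theta> (i + 1)" "x = cis a"
    using assms(2) by auto
  ultimately obtain m where "i = k + m * N"
    using open_arc_meets_arc by metis
  then show "k = i"
    using index_congruent_eq assms(1) k by metis
qed

lemma open_arcs_disjoint:
  assumes "i \<in> {1..N}" "k \<in> {1..N}" "i \<noteq> k"
  shows "cis ` {\<theta> i <..< \<theta> (i + 1)} \<inter> cis ` {\<theta> k <..< \<theta> (k + 1)} = {}"
proof (rule ccontr)
  assume "cis ` {\<theta> i <..< \<theta> (i + 1)} \<inter> cis ` {\<theta> k <..< \<theta> (k + 1)} \<noteq> {}"
  then obtain a b where "\<theta> i < a" "a < \<theta> (i + 1)" "\<theta> k < b" "b < \<theta> (k + 1)" "cis a = cis b"
    by auto
  then obtain m where "i = k + m * N"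
    using open_arc_meets_arc by (meson less_imp_le)
  then show False
    using index_congruent_eq assms by metis
qed

lemma open_arc_subset_iff:
  assumes "p < q" "q \<le> p + N"
  shows "cis ` {\<theta> j <..< \<theta> (j + 1)} \<subseteq> cis ` {\<theta> p <..< \<theta> q} \<longleftrightarrow> (j - p) mod N < q - p"
proof
  assume sub: "cis ` {\<theta> j <..< \<theta> (j + 1)} \<subseteq> cis ` {\<theta> p <..< \<theta> q}"
  define a where "a = (\<theta> j + \<theta> (j + 1)) / 2"
  have a: "\<theta> j < a" "a < \<theta> (j + 1)"
    using angle_less_succ[of j] by (auto simp: a_def)
  then have "cis a \<in> cis ` {\<theta> p <..< \<theta> q}" using sub by auto
  then obtain m :: int where b: "\<theta> p < a + 2 * pi * m" "a + 2 * pi * m < \<theta> q"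
    by (auto simp: cis_mem_image_iff)
  have "\<theta> p < \<theta> (j + m * N + 1)" "\<theta> (j + m * N) < \<theta> q"
    using a b angle_period_multiple[of j m] angle_period_multiple[of "j + 1" m]
    by (simp_all add: algebra_simps)
  then have m: "p \<le> j + m * N" "j + m * N < q"
    unfolding angle_less_iff by linarith+
  have "(j - p) mod N = (j + m * N - p) mod N"
    by (metis add_diff_eq diff_add_eq mod_mult_self1)
  also have "\<dots> = j + m * N - p"
    using m assms by (intro mod_pos_pos_trivial) linarith+
  finally show "(j - p) mod N < q - p" using m by simp
next
  assume h: "(j - p) mod N < q - p"
  define j' where "j' = p + (j - p) mod N"
  have j': "p \<le> j'" "j' < q" "j = j' + (j - p) div N * N"
    using h period_ge_2 by (auto simp: j'_def algebra_simps)
  show "cis ` {\<theta> j <..< \<theta> (j + 1)} \<subseteq> cis ` {\<theta> p <..< \<theta> q}"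
  proof
    fix z assume "z \<in> cis ` {\<theta> j <..< \<theta> (j + 1)}"
    then obtain a where a: "\<theta> j < a" "a < \<theta> (j + 1)" "z = cis a" by auto
    define m where "m = (j - p) div N"
    have "\<theta> j' < a + 2 * pi * (- m)" "a + 2 * pi * (- m) < \<theta> (j' + 1)"
      using a j' angle_period_multiple[of j' m] angle_period_multiple[of "j' + 1" m]
      by (simp_all add: m_def algebra_simps)
    moreover have "\<theta> p \<le> \<theta> j'" "\<theta> (j' + 1) \<le> \<theta> q"
      using j' by (simp_all add: angle_le_iff)
    ultimately have "cis (a + 2 * pi * of_int (- m)) \<in> cis ` {\<theta> p <..< \<theta> q}"
      by auto
    then show "z \<in> cis ` {\<theta> p <..< \<theta> q}"
      using a(3) by (simp only: cis_add_2pi_multiple)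
  qed
qed

lemma arcs_union:
  assumes "p < q"
  shows "(\<Union>j\<in>{p..<q}. cis ` {\<theta> j .. \<theta> (j + 1)}) = cis ` {\<theta> p .. \<theta> q}"
  using assms
proof (induction q rule: int_gr_induct)
  case base
  have "{p..<p + 1} = {p}" by auto
  then show ?case by simp
next
  case (step q)
  have "{p..<q + 1} = insert q {p..<q}" using step by auto
  moreover have "{\<theta> p .. \<theta> (q + 1)} = {\<theta> p .. \<theta> q} \<union> {\<theta> q .. \<theta> (q + 1)}"
    using step angle_le_iff[of p q] angle_le_iff[of q "q + 1"] by auto
  ultimately show ?case
    using step by (simp add: image_Un Un_commute)
qed

lemma arcs_cover_circle: "(\<Union>k\<in>{1..N}. cis ` {\<theta> k .. \<theta> (k + 1)}) = circle"
proof -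
  have "{1..N} = {1..<N + 1}" by auto
  then have "(\<Union>k\<in>{1..N}. cis ` {\<theta> k .. \<theta> (k + 1)}) = cis ` {\<theta> 1 .. \<theta> (1 + N)}"
    using arcs_union[of 1 "N + 1"] period_ge_2 by (simp add: add.commute)
  then show ?thesis
    using angle_period[of 1] circle_eq_image_cis[of "\<theta> 1"] by simp
qed

lemma circ_int_arc: "circ_int (cis ` {\<theta> k .. \<theta> (k + 1)}) = cis ` {\<theta> k <..< \<theta> (k + 1)}"
  using angle_less_succ[of k] angle_succ_less[of k] by (intro circ_int_image_cis_Icc) auto

lemma arc_window_union:
  assumes "p < q" "q \<le> p + N"
  shows "\<Union>{cis ` {\<theta> j .. \<theta> (j + 1)} | j. j \<in> {1..N} \<and> (j - p) mod N < q - p}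
    = cis ` {\<theta> p .. \<theta> q}"
proof -
  have mod_shift: "(j + m * N - p) mod N = (j - p) mod N" for j m
    by (metis add_diff_eq diff_add_eq mod_mult_self1)
  show ?thesis
  proof (intro equalityI subsetI)
    fix z assume "z \<in> \<Union>{cis ` {\<theta> j .. \<theta> (j + 1)} | j. j \<in> {1..N} \<and> (j - p) mod N < q - p}"
    then obtain j where j: "(j - p) mod N < q - p" "z \<in> cis ` {\<theta> j .. \<theta> (j + 1)}" by blast
    define j' where "j' = p + (j - p) mod N"
    have "j' = j + (- ((j - p) div N)) * N"
      by (simp add: j'_def algebra_simps minus_div_mult_eq_mod [symmetric])
    then have "z \<in> cis ` {\<theta> j' .. \<theta> (j' + 1)}"
      using j(2) arc_shift[of j "- ((j - p) div N)"] by simp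
    moreover have "j' \<in> {p..<q}"
      using j(1) period_ge_2 by (simp add: j'_def)
    ultimately show "z \<in> cis ` {\<theta> p .. \<theta> q}"
      using arcs_union[OF assms(1)] by blast
  next
    fix z assume "z \<in> cis ` {\<theta> p .. \<theta> q}"
    then obtain j' where j': "j' \<in> {p..<q}" "z \<in> cis ` {\<theta> j' .. \<theta> (j' + 1)}"
      using arcs_union[OF assms(1)] by blast
    obtain j m where j: "j \<in> {1..N}" "j' = j + m * N"
      using index_representative by blast
    have "(j - p) mod N = j' - p"
      using mod_shift[of j m] j' assms j(2) by (simp add: mod_pos_pos_trivial)
    then have "(j - p) mod N < q - p"
      using j' by simp
    moreover have "z \<in> cis ` {\<theta> j .. \<theta> (j + 1)}"
      using j'(2) j(2) arc_shift[of j m] by simp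
    ultimately show "z \<in> \<Union>{cis ` {\<theta> j .. \<theta> (j + 1)} | j. j \<in> {1..N} \<and> (j - p) mod N < q - p}"
      using j(1) by blast
  qed
qed

lemma arc_in_image_iff:
  assumes I: "\<And>k. I k = cis ` {\<theta> k .. \<theta> (k + 1)}"
    and image: "f ` circ_int (I i) = cis ` {\<theta> p <..< \<theta> q}"
    and "p < q" "q \<le> p + N"
  shows "circ_int (I j) \<subseteq> f ` circ_int (I i) \<longleftrightarrow> (j - p) mod N < q - p"
  using open_arc_subset_iff[OF assms(3,4), of j] unfolding image by (simp only: I circ_int_arc)

lemma markov_partition_of_arcs:
  assumes I: "\<And>k. I k = cis ` {\<theta> k .. \<theta> (k + 1)}"
    and inj: "\<And>i. i \<in> {1..N} \<Longrightarrow> inj_on f (circ_int (I i))"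
    and cont: "\<And>i. i \<in> {1..N} \<Longrightarrow> continuous_on (circ_int (I i)) f"
    and image: "\<And>i. i \<in> {1..N} \<Longrightarrow> f ` circ_int (I i) = cis ` {\<theta> (p i) <..< \<theta> (q i)}"
    and bounds: "\<And>i. p i < q i" "\<And>i. q i \<le> p i + N"
  shows "markov_partition f I {1..N}"
  unfolding markov_partition_def
proof (intro conjI ballI impI)
  show "finite {1..N}" by simp
  show "(\<Union>k\<in>{1..N}. I k) = circle"
    unfolding I by (rule arcs_cover_circle)
  show "circ_int (I i) \<inter> circ_int (I j) = {}" if "i \<in> {1..N}" "j \<in> {1..N}" "i \<noteq> j" for i j
    unfolding I circ_int_arc using that by (rule open_arcs_disjoint)
  fix i assume i: "i \<in> {1..N}"
  show "I i = cl (circ_int (I i))"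
    unfolding I circ_int_arc cl_eq_closure using angle_less_succ[of i]
    by (simp add: closure_image_cis_Ioo)
  show "inj_on f (circ_int (I i))" "continuous_on (circ_int (I i)) f"
    using inj cont i by auto
  have "{I j | j. j \<in> {1..N} \<and> circ_int (I j) \<subseteq> f ` circ_int (I i)}
      = {cis ` {\<theta> j .. \<theta> (j + 1)} | j. j \<in> {1..N} \<and> (j - p i) mod N < q i - p i}"
    using arc_in_image_iff[OF I image[OF i] bounds] I by auto
  then show "cl (f ` circ_int (I i)) = \<Union>{I j | j. j \<in> {1..N} \<and> circ_int (I j) \<subseteq> f ` circ_int (I i)}"
    using bounds angle_less_iff[of "p i" "q i"] arc_window_union[of "p i" "q i"]
    by (simp add: image[OF i] cl_eq_closure closure_image_cis_Ioo)
qed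

end

section \<open>Hyperbolic translations on the boundary circle\<close>

lemma mobH_denominator_nonzero:
  assumes "\<bar>t\<bar> < 1" "cmod z = 1"
  shows "1 + complex_of_real t * z \<noteq> 0"
proof
  assume "1 + complex_of_real t * z = 0"
  then have "cmod (complex_of_real t * z) = 1"
    by (metis add_eq_0_iff norm_minus_cancel norm_one)
  then show False
    using assms by (simp add: norm_mult)
qed

lemma inj_on_mobH_circle:
  assumes "\<bar>t\<bar> < 1"
  shows "inj_on (mobH t) circle"
proof
  fix a b assume ab: "a \<in> circle" "b \<in> circle" "mobH t a = mobH t b"
  define s where "s = complex_of_real t"
  have "1 + s * a \<noteq> 0" "1 + s * b \<noteq> 0"
    using ab mobH_denominator_nonzero[OF assms] by (auto simp: s_def circle_def)
  then have "(a + s) * (1 + s * b) = (b + s) * (1 + s * a)"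
    using ab(3) by (simp add: mobH_def s_def frac_eq_eq)
  then have "(a - b) * (1 - s * s) = 0"
    by (simp add: algebra_simps)
  moreover have "s * s \<noteq> 1"
  proof -
    have "\<bar>t\<bar> * \<bar>t\<bar> < 1 * 1"
      using assms by (intro mult_strict_mono) auto
    then have "t * t \<noteq> 1" by (simp add: abs_mult_self_eq)
    then show ?thesis unfolding s_def by (metis of_real_1 of_real_eq_iff of_real_mult)
  qed
  ultimately show "a = b" by simp
qed

lemma continuous_on_mobH_circle:
  assumes "\<bar>t\<bar> < 1"
  shows "continuous_on circle (mobH t)"
  unfolding mobH_def
  using mobH_denominator_nonzero[OF assms] by (intro continuous_intros) (auto simp: circle_def)

text \<open>In the coordinate \<open>u\<close> of the point \<open>cis (pi + u)\<close>, the hyperbolic translation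
  \<open>mobH t\<close> acts by \<open>boundary_angle ((1 + t) / (1 - t))\<close> (tangent half-angle substitution).\<close>

definition boundary_angle :: "real \<Rightarrow> real \<Rightarrow> real" where
  "boundary_angle K u = 2 * arctan (K * tan (u / 2))"

lemma boundary_angle_bounds: "-pi < boundary_angle K u" "boundary_angle K u < pi"
  using arctan_bounded[of "K * tan (u / 2)"] by (simp_all add: boundary_angle_def)

lemma boundary_angle_minus: "boundary_angle K (- u) = - boundary_angle K u"
  by (simp add: boundary_angle_def arctan_minus)

lemma boundary_angle_strict_mono:
  assumes "K > 0" "-pi < u" "u < u'" "u' < pi"
  shows "boundary_angle K u < boundary_angle K u'"
proof -
  have "tan (u / 2) < tan (u' / 2)"
    using assms by (intro tan_monotone) auto
  then show ?thesis
    using assms(1) by (simp add: boundary_angle_def arctan_less_iff)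
qed

lemma boundary_angle_inverse:
  assumes "K \<noteq> 0" "-pi < v" "v < pi"
  shows "boundary_angle K (boundary_angle (1 / K) v) = v"
proof -
  have "boundary_angle K (boundary_angle (1 / K) v) = 2 * arctan (tan (v / 2))"
    using assms(1) by (simp add: boundary_angle_def tan_arctan)
  also have "\<dots> = v"
    using assms by (subst arctan_tan) auto
  finally show ?thesis .
qed

lemma boundary_angle_image:
  assumes "K > 0" "-pi < a - d" "a < b" "b - d < pi"
  shows "(\<lambda>x. c + boundary_angle K (x - d)) ` {a<..<b}
    = {c + boundary_angle K (a - d) <..< c + boundary_angle K (b - d)}"
proof (intro equalityI subsetI)
  fix y assume "y \<in> (\<lambda>x. c + boundary_angle K (x - d)) ` {a<..<b}"
  then obtain x where "a < x" "x < b" "y = c + boundary_angle K (x - d)" by auto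
  then show "y \<in> {c + boundary_angle K (a - d) <..< c + boundary_angle K (b - d)}"
    using assms boundary_angle_strict_mono[of K "a - d" "x - d"]
      boundary_angle_strict_mono[of K "x - d" "b - d"] by auto
next
  fix y assume y: "y \<in> {c + boundary_angle K (a - d) <..< c + boundary_angle K (b - d)}"
  define x where "x = d + boundary_angle (1 / K) (y - c)"
  have "-pi < y - c" "y - c < pi"
    using y boundary_angle_bounds[of K "a - d"] boundary_angle_bounds[of K "b - d"] by auto
  then have hx: "boundary_angle K (x - d) = y - c"
    using assms(1) by (simp add: x_def boundary_angle_inverse)
  have xb: "-pi < x - d" "x - d < pi"
    using boundary_angle_bounds[of "1 / K"] by (auto simp: x_def)
  have "a < x"
  proof (rule ccontr)
    assume "\<not> a < x"
    then have "boundary_angle K (x - d) \<le> boundary_angle K (a - d)"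
      using boundary_angle_strict_mono[OF assms(1), of "x - d" "a - d"] xb assms
      by (cases "x = a") auto
    then show False using hx y by simp
  qed
  moreover have "x < b"
  proof (rule ccontr)
    assume "\<not> x < b"
    then have "boundary_angle K (b - d) \<le> boundary_angle K (x - d)"
      using boundary_angle_strict_mono[OF assms(1), of "b - d" "x - d"] xb assms
      by (cases "x = b") auto
    then show False using hx y by simp
  qed
  ultimately show "y \<in> (\<lambda>x. c + boundary_angle K (x - d)) ` {a<..<b}"
    using hx by (intro image_eqI[of _ _ x]) auto
qed

lemma cis_double_tan:
  assumes "cos x \<noteq> 0"
  shows "cis (2 * x) = (1 + \<i> * tan x) / (1 - \<i> * tan x)"
proof -
  have "cis x = complex_of_real (cos x) * (1 + \<i> * tan x)"
    "cis (- x) = complex_of_real (cos x) * (1 - \<i> * tan x)"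
    using assms by (simp_all add: complex_eq_iff tan_def)
  moreover have "1 - \<i> * tan x \<noteq> 0"
    by (simp add: complex_eq_iff)
  ultimately show ?thesis
    using assms by (metis cis_divide diff_minus_eq_add mult_2 mult_divide_mult_cancel_left_if of_real_eq_0_iff)
qed

lemma mobH_cis:
  assumes "0 < t" "t < 1" "-pi < u" "u < pi"
  shows "mobH t (cis (pi + u)) = cis (pi + boundary_angle ((1 + t) / (1 - t)) u)"
proof -
  define K where "K = (1 + t) / (1 - t)"
  define s where "s = tan (u / 2)"
  define z where "z = cis u"
  have "cos (u / 2) \<noteq> 0"
    using assms by (intro order.strict_implies_not_eq[symmetric] cos_gt_zero_pi) auto
  moreover have "1 - \<i> * s \<noteq> 0"
    by (simp add: complex_eq_iff)
  ultimately have z: "z * (1 - \<i> * s) = 1 + \<i> * s"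
    using cis_double_tan[of "u / 2"] by (simp add: s_def z_def field_simps)
  have w: "cis (boundary_angle K u) = (1 + \<i> * (K * s)) / (1 - \<i> * (K * s))"
    using cis_double_tan[of "arctan (K * s)"] by (simp add: boundary_angle_def s_def tan_arctan)
  have "K * (1 - t) = 1 + t"
    using assms by (simp add: K_def)
  then have K: "complex_of_real K * (1 - complex_of_real t) = 1 + complex_of_real t"
    by (metis of_real_1 of_real_add of_real_diff of_real_mult)
  have "(- z + t) * (1 - \<i> * (K * s)) + (1 + \<i> * (K * s)) * (1 - t * z)
      = (1 + t) * ((1 + \<i> * s) - z * (1 - \<i> * s)) + \<i> * s * (1 + z) * (K * (1 - t) - (1 + t))"
    by (simp add: algebra_simps)
  then have key: "(- z + t) * (1 - \<i> * (K * s)) = - ((1 + \<i> * (K * s)) * (1 - t * z))"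
    using z K by (simp add: eq_neg_iff_add_eq_0)
  have "1 - \<i> * (K * s) \<noteq> 0"
    by (simp add: complex_eq_iff)
  moreover have "1 + complex_of_real (- t) * z \<noteq> 0"
    using assms by (intro mobH_denominator_nonzero) (auto simp: z_def)
  ultimately have "(- z + t) / (1 - t * z) = - ((1 + \<i> * (K * s)) / (1 - \<i> * (K * s)))"
    using key by (simp add: divide_eq_eq field_simps)
  moreover have "mobH t (cis (pi + u)) = (- z + t) / (1 - t * z)"
    by (simp add: mobH_def z_def cis_mult[symmetric])
  moreover have "- ((1 + \<i> * (K * s)) / (1 - \<i> * (K * s))) = cis (pi + boundary_angle K u)"
    by (simp add: w cis_mult[symmetric]) (simp add: minus_divide_left)
  ultimately show ?thesis
    by (simp add: K_def)
qed

lemma one_plus_cos_over_one_minus_cos: "(1 + cos (b :: real)) / (1 - cos b) = (cos (b / 2) / sin (b / 2))\<^sup>2"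
proof -
  have "1 + cos b = 2 * (cos (b / 2))\<^sup>2" "1 - cos b = 2 * (sin (b / 2))\<^sup>2"
    using cos_double_cos[of "b / 2"] cos_double_sin[of "b / 2"] by simp_all
  then show ?thesis by (simp add: power_divide)
qed

lemma boundary_angle_cot_sq:
  assumes "0 < x" "x < pi / 2"
  shows "boundary_angle ((cos x / sin x)\<^sup>2) (2 * x) = pi - 2 * x"
proof -
  have "sin x > 0" "cos x > 0"
    using assms by (auto intro: sin_gt_zero cos_gt_zero_pi)
  then have "(cos x / sin x)\<^sup>2 * tan x = tan (pi / 2 - x)"
    by (simp add: tan_def sin_diff cos_diff power2_eq_square)
  then have "boundary_angle ((cos x / sin x)\<^sup>2) (2 * x) = 2 * arctan (tan (pi / 2 - x))"
    by (simp add: boundary_angle_def)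
  also have "\<dots> = pi - 2 * x"
    using assms by (subst arctan_tan) auto
  finally show ?thesis .
qed

text \<open>With \<open>x = beta g / 2\<close> and \<open>y = pi / Nside g\<close>, hypothesis \<open>right\<close> is the
  right-angle condition \<open>sin (beta g) = sqrt 2 * sin (pi / Nside g)\<close> of the polygon.\<close>

lemma boundary_angle_cot_sq_right_angle:
  assumes "0 < x" "x < y" "y < pi / 2" and right: "(sin y)\<^sup>2 = 2 * (sin x)\<^sup>2 * (cos x)\<^sup>2"
  shows "boundary_angle ((cos x / sin x)\<^sup>2) (2 * y - 2 * x) = pi - 2 * y - 2 * x"
proof -
  have pos: "sin x > 0" "cos (y - x) > 0" "sin (y + x) > 0"
    using assms by (auto intro: sin_gt_zero cos_gt_zero_pi)
  have "(cos x)\<^sup>2 * sin (y - x) * sin (y + x) - (sin x)\<^sup>2 * cos (y - x) * cos (y + x)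
      = (sin y)\<^sup>2 * ((cos x)\<^sup>2 + (sin x)\<^sup>2)\<^sup>2 - 2 * (sin x)\<^sup>2 * (cos x)\<^sup>2 * ((sin y)\<^sup>2 + (cos y)\<^sup>2)"
  proof -
    have "c\<^sup>2 * (S * c - C * s) * (S * c + C * s) - s\<^sup>2 * (C * c + S * s) * (C * c - S * s)
        = S\<^sup>2 * (c\<^sup>2 + s\<^sup>2)\<^sup>2 - 2 * s\<^sup>2 * c\<^sup>2 * (S\<^sup>2 + C\<^sup>2)" for c s C S :: real
      by (simp add: algebra_simps power2_eq_square)
    then show ?thesis
      unfolding sin_diff sin_add cos_diff cos_add .
  qed
  also have "\<dots> = 0"
    by (simp only: sin_cos_squared_add sin_cos_squared_add2) (simp add: right)
  finally have "(cos x)\<^sup>2 * sin (y - x) * sin (y + x) = cos (y + x) * ((sin x)\<^sup>2 * cos (y - x))"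
    by (simp add: algebra_simps)
  then have "(cos x / sin x)\<^sup>2 * tan (y - x) = cos (y + x) / sin (y + x)"
    using pos by (simp add: tan_def power_divide frac_eq_eq)
  also have "\<dots> = tan (pi / 2 - (y + x))"
    by (simp add: tan_def sin_diff cos_diff)
  finally have "boundary_angle ((cos x / sin x)\<^sup>2) (2 * y - 2 * x) = 2 * arctan (tan (pi / 2 - (y + x)))"
    by (simp add: boundary_angle_def diff_divide_distrib)
  also have "\<dots> = pi - 2 * y - 2 * x"
    using assms by (subst arctan_tan) auto
  finally show ?thesis .
qed

section \<open>Positive eigenvectors and cyclic window sums\<close>

lemma eigenvalue_norm_le_of_positive_eigenvector:
  fixes E :: "nat \<Rightarrow> nat \<Rightarrow> real" and V :: "nat \<Rightarrow> real" and w :: "nat \<Rightarrow> complex"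
  assumes E: "\<And>i j. i < n \<Longrightarrow> j < n \<Longrightarrow> 0 \<le> E i j"
    and V: "\<And>i. i < n \<Longrightarrow> 0 < V i"
    and EV: "\<And>i. i < n \<Longrightarrow> (\<Sum>j<n. E i j * V j) = r * V i"
    and w: "\<exists>i<n. w i \<noteq> 0"
    and Ew: "\<And>i. i < n \<Longrightarrow> (\<Sum>j<n. complex_of_real (E i j) * w j) = \<mu> * w i"
  shows "cmod \<mu> \<le> r"
proof -
  define \<rho> where "\<rho> i = cmod (w i) / V i" for i
  define R where "R = Max (\<rho> ` {..<n})"
  have "{..<n} \<noteq> {}" using w by auto
  then have "R \<in> \<rho> ` {..<n}"
    unfolding R_def by (intro Max_in) auto
  then obtain i0 where i0: "i0 < n" "\<rho> i0 = R" by auto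
  have "\<rho> j \<le> R" if "j < n" for j
    using that by (simp add: R_def)
  then have w_le: "cmod (w j) \<le> R * V j" if "j < n" for j
    using that V[OF that] by (auto simp: \<rho>_def divide_le_eq)
  have w_i0: "cmod (w i0) = R * V i0"
    using i0 V[of i0] by (auto simp: \<rho>_def field_simps)
  obtain i1 where "i1 < n" "w i1 \<noteq> 0" using w by auto
  then have "0 < R"
    using w_le[of i1] V[of i1] by (smt (verit) mult_nonpos_nonneg zero_less_norm_iff)
  have "cmod \<mu> * cmod (w i0) = cmod (\<Sum>j<n. complex_of_real (E i0 j) * w j)"
    using Ew[OF i0(1)] by (simp add: norm_mult)
  also have "\<dots> \<le> (\<Sum>j<n. E i0 j * cmod (w j))"
    using norm_sum[of "\<lambda>j. complex_of_real (E i0 j) * w j" "{..<n}"] E i0(1)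
    by (simp add: norm_mult)
  also have "\<dots> \<le> (\<Sum>j<n. E i0 j * (R * V j))"
    using E i0 w_le by (intro sum_mono mult_left_mono) auto
  also have "\<dots> = R * (\<Sum>j<n. E i0 j * V j)"
    by (simp add: sum_distrib_left algebra_simps)
  also have "\<dots> = r * cmod (w i0)"
    using EV[OF i0(1)] w_i0 by simp
  finally show ?thesis
    using \<open>0 < R\<close> V[OF i0(1)] w_i0 by simp
qed

lemma spectral_radius_of_positive_eigenvector:
  fixes E :: "nat \<Rightarrow> nat \<Rightarrow> real" and V :: "nat \<Rightarrow> real"
  assumes "0 < n"
    and E: "\<And>i j. i < n \<Longrightarrow> j < n \<Longrightarrow> 0 \<le> E i j"
    and V: "\<And>i. i < n \<Longrightarrow> 0 < V i"
    and EV: "\<And>i. i < n \<Longrightarrow> (\<Sum>j<n. E i j * V j) = r * V i"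
  shows "eigenvalue (mat n n (\<lambda>(i, j). complex_of_real (E i j))) (complex_of_real r)"
    and "eigenvalue (mat n n (\<lambda>(i, j). complex_of_real (E i j))) \<mu> \<Longrightarrow> cmod \<mu> \<le> r"
proof -
  let ?M = "mat n n (\<lambda>(i, j). complex_of_real (E i j))"
  have mult: "(?M *\<^sub>v v) $ i = (\<Sum>j<n. complex_of_real (E i j) * v $ j)"
    if "i < n" "dim_vec v = n" for v i
    using that by (simp add: scalar_prod_def lessThan_atLeast0)
  define v where "v = vec n (\<lambda>j. complex_of_real (V j))"
  have "v \<noteq> 0\<^sub>v n"
    using V[OF \<open>0 < n\<close>] \<open>0 < n\<close> by (auto simp: v_def dest!: arg_cong[where f = "\<lambda>v. v $ 0"])
  moreover have "?M *\<^sub>v v = complex_of_real r \<cdot>\<^sub>v v"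
  proof (rule eq_vecI)
    fix i assume "i < dim_vec (complex_of_real r \<cdot>\<^sub>v v)"
    then have i: "i < n" by (simp add: v_def)
    have "(?M *\<^sub>v v) $ i = complex_of_real (\<Sum>j<n. E i j * V j)"
      using mult[OF i] by (simp add: v_def)
    then show "(?M *\<^sub>v v) $ i = (complex_of_real r \<cdot>\<^sub>v v) $ i"
      using EV[OF i] i by (simp add: v_def)
  qed (simp add: v_def)
  moreover have "v \<in> carrier_vec n"
    by (simp add: v_def)
  ultimately show "eigenvalue ?M (complex_of_real r)"
    unfolding eigenvalue_def eigenvector_def by auto
  assume "eigenvalue ?M \<mu>"
  then obtain w where w: "w \<in> carrier_vec n" "w \<noteq> 0\<^sub>v n" "?M *\<^sub>v w = \<mu> \<cdot>\<^sub>v w"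
    by (auto simp: eigenvalue_def eigenvector_def)
  have "\<exists>i<n. w $ i \<noteq> 0"
    using w(1,2) by (metis carrier_vecD eq_vecI index_zero_vec(1,2))
  moreover have "(\<Sum>j<n. complex_of_real (E i j) * w $ j) = \<mu> * w $ i" if "i < n" for i
    using arg_cong[OF w(3), of "\<lambda>v. v $ i"] mult[OF that] that w(1) by simp
  ultimately show "cmod \<mu> \<le> r"
    using eigenvalue_norm_le_of_positive_eigenvector[OF E V EV, of "\<lambda>j. w $ j" \<mu>] by blast
qed

lemma sum_cyclic_window:
  fixes G :: "int \<Rightarrow> 'a::comm_monoid_add" and N L :: nat
  assumes "0 < N" "L \<le> N" and G: "\<And>a b. a mod int N = b mod int N \<Longrightarrow> G a = G b"
  shows "(\<Sum>j<N. if (int j - c) mod int N < int L then G (int j) else 0) = (\<Sum>r<L. G (c + int r))"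
proof -
  define F where "F r = (if r < L then G (c + int r) else 0)" for r
  have "(\<Sum>j<N. if (int j - c) mod int N < int L then G (int j) else 0)
      = (\<Sum>r<N. F r)"
  proof (rule sum.reindex_bij_witness[where j = "\<lambda>j. nat ((int j - c) mod int N)"
        and i = "\<lambda>r. nat ((int r + c) mod int N)"])
    fix j assume "j \<in> {..<N}"
    then show "nat ((int (nat ((int j - c) mod int N)) + c) mod int N) = j"
      using assms(1) by (simp add: mod_add_left_eq)
    show "nat ((int j - c) mod int N) \<in> {..<N}"
      using assms(1) by (simp add: nat_less_iff)
    have "G (int j) = G (c + (int j - c) mod int N)"
      using G[of "int j" "c + (int j - c) mod int N"] by (simp add: mod_add_right_eq)
    then show "F (nat ((int j - c) mod int N))
        = (if (int j - c) mod int N < int L then G (int j) else 0)"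
      using assms(1) by (simp add: F_def nat_less_iff)
  next
    fix r assume "r \<in> {..<N}"
    then show "nat ((int (nat ((int r + c) mod int N)) - c) mod int N) = r"
      using assms(1) by (simp add: mod_diff_left_eq)
    show "nat ((int r + c) mod int N) \<in> {..<N}"
      using assms(1) by (simp add: nat_less_iff)
  qed
  also have "\<dots> = (\<Sum>r<L. G (c + int r))"
  proof -
    have "{..<N} \<inter> {r. r < L} = {..<L}" using assms(2) by auto
    then show ?thesis by (simp add: F_def sum.If_cases)
  qed
  finally show ?thesis .
qed

lemma sum_alternating:
  fixes X Y :: real and c :: int
  assumes "odd c"
  shows "(\<Sum>r<2 * m + 1. if even (c + int r) then X else Y) = real m * (X + Y) + Y"
proof -
  have "(\<Sum>r<2 * m. if even (c + int r) then X else Y) = real m * (X + Y)" for m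
  proof (induction m)
    case (Suc m)
    have "{..<2 * Suc m} = insert (2 * m + 1) (insert (2 * m) {..<2 * m})" by auto
    then show ?case
      using Suc assms by (simp add: algebra_simps)
  qed simp
  then show ?thesis
    using assms by simp
qed

section \<open>The partition for \<open>PQ\<close>\<close>

definition central_angle :: "nat \<Rightarrow> real" where
  "central_angle g = 2 * pi / real (Nside g)"

definition pq_angle :: "nat \<Rightarrow> int \<Rightarrow> real" where
  "pq_angle g k = (if odd k then alpha g k - beta g else alpha g (k - 1) + beta g)"

definition pq_image_start :: "nat \<Rightarrow> int \<Rightarrow> int" where
  "pq_image_start g k = sigma g k + (if odd k then 1 else 2)"

definition pq_image_end :: "nat \<Rightarrow> int \<Rightarrow> int" where
  "pq_image_end g k = sigma g k + int (Nside g) - (if odd k then 0 else 1)"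

definition pq_transition_entry :: "nat \<Rightarrow> nat \<Rightarrow> nat \<Rightarrow> real" where
  "pq_transition_entry g i j =
    (if (int j + 1 - pq_image_start g (int i + 1)) mod int (Nside g)
        < pq_image_end g (int i + 1) - pq_image_start g (int i + 1) then 1 else 0)"

lemma Abar_PQ_eq_cis: "Abar_PQ g k = cis (pq_angle g k)"
  by (simp add: Abar_PQ_def pq_angle_def Ppt_def Qpt_def)

lemma odd_sigma_iff: "odd (sigma g k) \<longleftrightarrow> odd k"
proof -
  have "even (int (Nside g))" by (simp add: Nside_def)
  then have "odd (a mod int (Nside g)) \<longleftrightarrow> odd a" for a
    by (metis even_iff_mod_2_eq_zero mod_mod_cancel)
  then show ?thesis by (simp add: sigma_def)
qed

lemma alpha_add: "alpha g (k + j) = alpha g k + j * central_angle g"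
  by (simp add: alpha_def central_angle_def add_divide_distrib distrib_left)

context
  fixes g :: nat
  assumes g2: "2 \<le> g"
begin

lemma Nside_ge_12: "12 \<le> Nside g"
  using g2 by (simp add: Nside_def)

lemma alpha_period: "alpha g (k + int (Nside g)) = alpha g k + 2 * pi"
  using Nside_ge_12 by (simp add: alpha_add central_angle_def)

lemma beta_bounds:
  "0 < beta g" "beta g < central_angle g" "central_angle g \<le> pi / 6"
  "sin (beta g) = sqrt 2 * sin (pi / real (Nside g))"
proof -
  define y where "y = pi / real (Nside g)"
  have "y \<le> pi / 12"
    unfolding y_def by (rule divide_left_mono) (use Nside_ge_12 in auto)
  then have y: "0 < y" "y \<le> pi / 12"
    using Nside_ge_12 by (auto simp: y_def)
  have sin_y: "0 < sin y" "sin y \<le> y"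
    using y by (auto intro!: sin_gt_zero sin_x_le_x simp: pi_ge_two)
  define v where "v = sqrt 2 * sin y"
  have "v \<le> 2 * y"
    using sin_y sqrt2_less_2 unfolding v_def by (intro mult_mono) auto
  then have v: "0 < v" "v < 1"
    using sin_y y pi_less_4 by (auto simp: v_def)
  have beta: "beta g = arcsin v"
    by (simp add: beta_def v_def y_def)
  show "0 < beta g"
    unfolding beta using arcsin_less_arcsin[of 0 v] v by simp
  show "sin (beta g) = sqrt 2 * sin (pi / real (Nside g))"
    unfolding beta using v by (simp add: v_def y_def)
  have "sqrt 2 / 2 < cos y"
    using cos_monotone_0_pi[of y "pi / 4"] y by (simp add: cos_45)
  then have "v < sin (2 * y)"
    using sin_y unfolding v_def sin_double by (simp add: algebra_simps)
  then have "arcsin v < arcsin (sin (2 * y))"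
    using v by (intro arcsin_less_arcsin) auto
  also have "arcsin (sin (2 * y)) = 2 * y"
    using y by (intro arcsin_sin) auto
  finally show "beta g < central_angle g"
    unfolding beta by (simp add: central_angle_def y_def)
  have "2 * pi / real (Nside g) \<le> 2 * pi / 12"
    by (rule divide_left_mono) (use Nside_ge_12 in auto)
  then show "central_angle g \<le> pi / 6"
    by (simp add: central_angle_def)
qed

lemma pq_angle_odd:
  "odd k \<Longrightarrow> pq_angle g k = alpha g k - beta g \<and> pq_angle g (k + 1) = alpha g k + beta g"
  by (simp add: pq_angle_def)

lemma pq_angle_even:
  "even k \<Longrightarrow> pq_angle g k = alpha g k - central_angle g + beta g
    \<and> pq_angle g (k + 1) = alpha g k + central_angle g - beta g"
  using alpha_add[of g "k - 1" 1] alpha_add[of g k 1] by (simp add: pq_angle_def)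

lemma periodic_pq_angle: "periodic_angles (pq_angle g) (int (Nside g))"
proof
  fix k
  have "odd (k + int (Nside g)) \<longleftrightarrow> odd k" by (simp add: Nside_def)
  then show "pq_angle g (k + int (Nside g)) = pq_angle g k + 2 * pi"
    using alpha_period[of k] alpha_period[of "k - 1"] by (simp add: pq_angle_def algebra_simps)
  show "pq_angle g k < pq_angle g (k + 1)"
    using beta_bounds pq_angle_odd[of k] pq_angle_even[of k] by (cases "odd k") auto
qed (use Nside_ge_12 in simp)

interpretation pq: periodic_angles "pq_angle g" "int (Nside g)"
  by (rule periodic_pq_angle)

lemma Ipart_eq_image_cis: "Ipart g k = cis ` {pq_angle g k .. pq_angle g (k + 1)}"
proof -
  have "Ipart g k = arc_cc (Abar_PQ g k) (Abar_PQ g (k + 1))"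
    by (simp add: Ipart_def Abar_PQ_def)
  then show ?thesis
    using pq.angle_less_succ[of k] pq.angle_succ_less[of k]
    by (simp add: Abar_PQ_eq_cis arc_cc_cis)
qed

lemma fbar_PQ_eq_T:
  assumes "i \<in> {1..int (Nside g)}" "x \<in> cis ` {pq_angle g i <..< pq_angle g (i + 1)}"
  shows "fbar g (Abar_PQ g) x = T g i x"
proof -
  have "arc_co (Abar_PQ g k) (Abar_PQ g (k + 1)) = cis ` {pq_angle g k ..< pq_angle g (k + 1)}" for k
    using pq.angle_less_succ[of k] pq.angle_succ_less[of k]
    by (simp add: Abar_PQ_eq_cis arc_co_cis)
  then show ?thesis
    using pq.the_arc_index[OF assms] by (simp add: fbar_def)
qed

lemma cos_beta_bounds: "0 < cos (beta g)" "cos (beta g) < 1"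
proof -
  have "0 < beta g" "beta g < pi / 2"
    using beta_bounds by auto
  then show "0 < cos (beta g)" "cos (beta g) < 1"
    using cos_monotone_0_pi[of 0 "beta g"] by (auto intro: cos_gt_zero_pi)
qed

lemma T_cis:
  assumes "-pi < x - alpha g k" "x - alpha g k < pi"
  shows "T g k (cis x) = cis (alpha g (sigma g k) + pi
    + boundary_angle ((cos (beta g / 2) / sin (beta g / 2))\<^sup>2) (x - alpha g k))"
proof -
  have "cis (pi - alpha g k) * cis x = cis (pi + (x - alpha g k))"
    unfolding cis_mult by (rule arg_cong[where f = cis]) simp
  then have "T g k (cis x) = cis (alpha g (sigma g k))
      * cis (pi + boundary_angle ((1 + cos (beta g)) / (1 - cos (beta g))) (x - alpha g k))"
    unfolding T_def using mobH_cis[of "cos (beta g)" "x - alpha g k"] cos_beta_bounds assms by simp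
  then show ?thesis
    by (simp add: cis_mult add.assoc one_plus_cos_over_one_minus_cos)
qed

lemma T_image_symmetric_arc:
  assumes "0 < r" "r < pi"
    and r': "boundary_angle ((cos (beta g / 2) / sin (beta g / 2))\<^sup>2) r = pi - r'"
  shows "T g k ` cis ` {alpha g k - r <..< alpha g k + r}
    = cis ` {alpha g (sigma g k) + r' <..< alpha g (sigma g k) + 2 * pi - r'}"
proof -
  define K where "K = (cos (beta g / 2) / sin (beta g / 2))\<^sup>2"
  define c where "c = alpha g (sigma g k) + pi"
  have "sin (beta g / 2) > 0"
    using beta_bounds pi_gt_zero by (intro sin_gt_zero) auto
  then have "K > 0"
    using beta_bounds cos_gt_zero_pi[of "beta g / 2"] by (simp add: K_def)
  have "T g k ` cis ` {alpha g k - r <..< alpha g k + r}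
      = cis ` (\<lambda>x. c + boundary_angle K (x - alpha g k)) ` {alpha g k - r <..< alpha g k + r}"
    unfolding image_image using assms by (intro image_cong) (auto simp: T_cis c_def K_def)
  also have "(\<lambda>x. c + boundary_angle K (x - alpha g k)) ` {alpha g k - r <..< alpha g k + r}
      = {c + boundary_angle K (- r) <..< c + boundary_angle K r}"
    using assms \<open>K > 0\<close> by (subst boundary_angle_image) auto
  finally show ?thesis
    using r' by (simp add: boundary_angle_minus c_def K_def algebra_simps)
qed

lemma boundary_angle_beta:
  "boundary_angle ((cos (beta g / 2) / sin (beta g / 2))\<^sup>2) (beta g) = pi - beta g"
  using boundary_angle_cot_sq[of "beta g / 2"] beta_bounds by simp

lemma boundary_angle_central_angle_minus_beta:
  "boundary_angle ((cos (beta g / 2) / sin (beta g / 2))\<^sup>2) (central_angle g - beta g)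
    = pi - (central_angle g + beta g)"
proof -
  have "sin (beta g) = 2 * sin (beta g / 2) * cos (beta g / 2)"
    using sin_double[of "beta g / 2"] by simp
  then have "(2 * sin (beta g / 2) * cos (beta g / 2))\<^sup>2 = (sqrt 2 * sin (pi / real (Nside g)))\<^sup>2"
    using beta_bounds(4) by simp
  then have right: "(sin (pi / real (Nside g)))\<^sup>2 = 2 * (sin (beta g / 2))\<^sup>2 * (cos (beta g / 2))\<^sup>2"
    by (simp add: power_mult_distrib) (simp add: mult_ac)
  have half: "central_angle g / 2 = pi / real (Nside g)"
    by (simp add: central_angle_def)
  show ?thesis
    using boundary_angle_cot_sq_right_angle[of "beta g / 2" "central_angle g / 2"]
      right[folded half] beta_bounds
    by simp
qed

lemma T_image_open_arc:
  "T g i ` cis ` {pq_angle g i <..< pq_angle g (i + 1)}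
    = cis ` {pq_angle g (pq_image_start g i) <..< pq_angle g (pq_image_end g i)}"
proof -
  define \<sigma> where "\<sigma> = sigma g i"
  have N: "pq_image_end g i = \<sigma> - (if odd i then 0 else 1) + int (Nside g)"
    by (simp add: pq_image_end_def \<sigma>_def)
  show ?thesis
  proof (cases "odd i")
    case True
    then have "odd \<sigma>" by (simp add: \<sigma>_def odd_sigma_iff)
    have "pq_angle g i = alpha g i - beta g" "pq_angle g (i + 1) = alpha g i + beta g"
      using pq_angle_odd[OF True] by simp_all
    moreover have "pq_angle g (pq_image_start g i) = alpha g \<sigma> + beta g"
      using pq_angle_odd[OF \<open>odd \<sigma>\<close>] True by (simp add: pq_image_start_def \<sigma>_def)
    moreover have "pq_angle g (pq_image_end g i) = alpha g \<sigma> + 2 * pi - beta g"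
      using pq_angle_odd[OF \<open>odd \<sigma>\<close>] pq.angle_period[of \<sigma>] True by (simp add: N)
    ultimately show ?thesis
      using T_image_symmetric_arc[OF _ _ boundary_angle_beta, of i] beta_bounds
      by (simp add: \<sigma>_def)
  next
    case False
    then have "even \<sigma>" using odd_sigma_iff[of g i] by (simp add: \<sigma>_def)
    have "pq_angle g i = alpha g i - (central_angle g - beta g)"
      "pq_angle g (i + 1) = alpha g i + (central_angle g - beta g)"
      using pq_angle_even[of i] False by simp_all
    moreover have "pq_angle g (pq_image_start g i) = alpha g \<sigma> + (central_angle g + beta g)"
      using pq_angle_odd[of "\<sigma> + 1"] \<open>even \<sigma>\<close> False alpha_add[of g \<sigma> 1]
      by (simp add: pq_image_start_def \<sigma>_def add.assoc)
    moreover have "pq_angle g (pq_image_end g i) = alpha g \<sigma> + 2 * pi - (central_angle g + beta g)"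
      using pq_angle_odd[of "\<sigma> - 1"] \<open>even \<sigma>\<close> False alpha_add[of g "\<sigma> - 1" 1]
        pq.angle_period[of "\<sigma> - 1"]
      by (simp add: N)
    ultimately show ?thesis
      using T_image_symmetric_arc[OF _ _ boundary_angle_central_angle_minus_beta, of i] beta_bounds
      by (simp add: \<sigma>_def)
  qed
qed

lemma inj_on_T_circle: "inj_on (T g k) circle"
proof
  fix x y assume xy: "x \<in> circle" "y \<in> circle" "T g k x = T g k y"
  define r where "r = cis (pi - alpha g k)"
  have "\<bar>cos (beta g)\<bar> < 1"
    using cos_beta_bounds by simp
  then have inj: "inj_on (mobH (cos (beta g))) circle"
    by (rule inj_on_mobH_circle)
  have "r * x \<in> circle" "r * y \<in> circle"
    using xy by (auto simp: circle_def r_def norm_mult)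
  moreover have "mobH (cos (beta g)) (r * x) = mobH (cos (beta g)) (r * y)"
    using xy(3) by (simp add: T_def r_def)
  ultimately have "r * x = r * y"
    using inj_onD[OF inj] by blast
  then show "x = y" by (simp add: r_def)
qed

lemma continuous_on_T_circle: "continuous_on circle (T g k)"
proof -
  have "\<bar>cos (beta g)\<bar> < 1"
    using cos_beta_bounds by simp
  then have "continuous_on circle (mobH (cos (beta g)))"
    by (rule continuous_on_mobH_circle)
  moreover have "continuous_on circle (\<lambda>z. cis (pi - alpha g k) * z)"
    by (intro continuous_intros)
  moreover have "(\<lambda>z. cis (pi - alpha g k) * z) ` circle \<subseteq> circle"
    by (auto simp: circle_def norm_mult)
  ultimately have "continuous_on circle (\<lambda>z. mobH (cos (beta g)) (cis (pi - alpha g k) * z))"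
    by (rule continuous_on_compose2)
  then show ?thesis
    unfolding T_def by (intro continuous_intros)
qed

lemma fbar_PQ_image:
  assumes "i \<in> {1..int (Nside g)}"
  shows "fbar g (Abar_PQ g) ` circ_int (Ipart g i)
    = cis ` {pq_angle g (pq_image_start g i) <..< pq_angle g (pq_image_end g i)}"
proof -
  have "fbar g (Abar_PQ g) ` circ_int (Ipart g i) = T g i ` cis ` {pq_angle g i <..< pq_angle g (i + 1)}"
    unfolding Ipart_eq_image_cis pq.circ_int_arc
    using fbar_PQ_eq_T[OF assms] by (rule image_cong[OF refl])
  then show ?thesis
    by (simp add: T_image_open_arc)
qed

lemma pq_image_bounds:
  "pq_image_start g i < pq_image_end g i" "pq_image_end g i \<le> pq_image_start g i + int (Nside g)"
  using Nside_ge_12 by (auto simp: pq_image_start_def pq_image_end_def)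

lemma markov_partition_fbar_PQ: "markov_partition (fbar g (Abar_PQ g)) (Ipart g) {1..int (Nside g)}"
proof (rule pq.markov_partition_of_arcs[OF Ipart_eq_image_cis _ _ fbar_PQ_image pq_image_bounds])
  fix i assume i: "i \<in> {1..int (Nside g)}"
  have on_arc: "circ_int (Ipart g i) \<subseteq> circle"
    unfolding Ipart_eq_image_cis pq.circ_int_arc by (auto simp: circle_def)
  have eq: "\<And>x. x \<in> circ_int (Ipart g i) \<Longrightarrow> fbar g (Abar_PQ g) x = T g i x"
    using fbar_PQ_eq_T[OF i] unfolding Ipart_eq_image_cis pq.circ_int_arc .
  show "inj_on (fbar g (Abar_PQ g)) (circ_int (Ipart g i))"
    using inj_on_subset[OF inj_on_T_circle on_arc] eq by (simp add: inj_on_def)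
  show "continuous_on (circ_int (Ipart g i)) (fbar g (Abar_PQ g))"
    by (rule continuous_on_eq[OF continuous_on_subset[OF continuous_on_T_circle[of i] on_arc]])
      (simp add: eq)
qed

lemma Ipart_in_fbar_PQ_image_iff:
  assumes "i \<in> {1..int (Nside g)}"
  shows "circ_int (Ipart g j) \<subseteq> fbar g (Abar_PQ g) ` circ_int (Ipart g i)
    \<longleftrightarrow> (j - pq_image_start g i) mod int (Nside g) < pq_image_end g i - pq_image_start g i"
  using pq.arc_in_image_iff[OF Ipart_eq_image_cis fbar_PQ_image[OF assms] pq_image_bounds] .

lemma trans_mat_fbar_PQ:
  "trans_mat (fbar g (Abar_PQ g)) (Ipart g) (Nside g)
    = mat (Nside g) (Nside g) (\<lambda>(i, j). complex_of_real (pq_transition_entry g i j))"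
proof (rule eq_matI)
  fix i j assume "i < dim_row (mat (Nside g) (Nside g) (\<lambda>(i, j). complex_of_real (pq_transition_entry g i j)))"
    "j < dim_col (mat (Nside g) (Nside g) (\<lambda>(i, j). complex_of_real (pq_transition_entry g i j)))"
  then have ij: "i < Nside g" "j < Nside g" by auto
  show "trans_mat (fbar g (Abar_PQ g)) (Ipart g) (Nside g) $$ (i, j)
      = mat (Nside g) (Nside g) (\<lambda>(i, j). complex_of_real (pq_transition_entry g i j)) $$ (i, j)"
    using ij Ipart_in_fbar_PQ_image_iff[of "int i + 1" "int j + 1"]
    by (simp add: trans_mat_def pq_transition_entry_def)
qed (simp_all add: trans_mat_def)

lemma pq_transition_row_sum:
  assumes "i < Nside g"
  shows "(\<Sum>j<Nside g. pq_transition_entry g i j * (if even j then X else Y))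
    = real (if even i then 4 * g - 3 else 4 * g - 4) * (X + Y) + Y"
proof -
  define k where "k = int i + 1"
  define m where "m = (if even i then 4 * g - 3 else 4 * g - 4)"
  define c where "c = pq_image_start g k - 1"
  have L: "pq_image_end g k - pq_image_start g k = int (2 * m + 1)"
    using g2 odd_sigma_iff[of g k] by (simp add: k_def m_def pq_image_start_def pq_image_end_def Nside_def)
  have "odd c"
    using odd_sigma_iff[of g k] by (simp add: c_def pq_image_start_def)
  have "2 dvd int (Nside g)"
    by (simp add: Nside_def)
  then have "a mod int (Nside g) mod 2 = a mod 2" for a
    by (rule mod_mod_cancel)
  then have parity: "a mod int (Nside g) = b mod int (Nside g) \<Longrightarrow> even a = even b" for a b
    by (metis even_iff_mod_2_eq_zero)
  have shift: "int j + 1 - pq_image_start g k = int j - c" for j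
    by (simp add: c_def)
  have "(\<Sum>j<Nside g. pq_transition_entry g i j * (if even j then X else Y))
      = (\<Sum>j<Nside g. if (int j - c) mod int (Nside g) < int (2 * m + 1)
          then (if even (int j) then X else Y) else 0)"
    unfolding pq_transition_entry_def k_def[symmetric] shift L by (intro sum.cong) auto
  also have "\<dots> = (\<Sum>r<2 * m + 1. if even (c + int r) then X else Y)"
  proof (rule sum_cyclic_window)
    show "0 < Nside g" "2 * m + 1 \<le> Nside g"
      using g2 by (auto simp: Nside_def m_def)
    show "(if even a then X else Y) = (if even b then X else Y)"
      if "a mod int (Nside g) = b mod int (Nside g)" for a b
      using parity[OF that] by simp
  qed
  also have "\<dots> = real m * (X + Y) + Y"
    using \<open>odd c\<close> by (rule sum_alternating)
  finally show ?thesis by (simp add: m_def)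
qed

lemma pq_transition_eigen_equation:
  fixes Y :: real
  defines "Y \<equiv> sqrt ((4 * real g - 3)\<^sup>2 - 1)"
  assumes "i < Nside g"
  shows "(\<Sum>j<Nside g. pq_transition_entry g i j * (if even j then 4 * real g - 2 else Y))
    = (4 * real g - 3 + Y) * (if even i then 4 * real g - 2 else Y)"
proof -
  have "1 \<le> 4 * real g - 3"
    using g2 by simp
  then have "1 * 1 \<le> (4 * real g - 3) * (4 * real g - 3)"
    by (intro mult_mono) auto
  then have "0 \<le> (4 * real g - 3)\<^sup>2 - 1"
    by (simp add: power2_eq_square)
  then have Y2: "Y * Y = (4 * real g - 4) * (4 * real g - 2)"
    by (simp add: Y_def power2_eq_square algebra_simps)
  have "real (4 * g - 3) = 4 * real g - 3" "real (4 * g - 4) = 4 * real g - 4"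
    using g2 by (simp_all add: of_nat_diff)
  then show ?thesis
    using pq_transition_row_sum[OF assms(2), of "4 * real g - 2" Y] Y2
    by (auto simp: algebra_simps)
qed

end

theorem mainTheorem5:
  fixes g :: nat
  assumes "g \<ge> 2"
  shows "markov_partition (fbar g (Abar_PQ g)) (Ipart g) {1..int (Nside g)} \<and>
         (let M = trans_mat (fbar g (Abar_PQ g)) (Ipart g) (Nside g);
              lam = 4 * real g - 3 + sqrt ((4 * real g - 3)\<^sup>2 - 1)
          in eigenvalue M (complex_of_real lam) \<and>
             (\<forall>\<mu>. eigenvalue M \<mu> \<longrightarrow> cmod \<mu> \<le> lam))"
proof -
  define Y where "Y = sqrt ((4 * real g - 3)\<^sup>2 - 1)"
  have "5 \<le> 4 * real g - 3"
    using assms by simp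
  then have "5 * 5 \<le> (4 * real g - 3) * (4 * real g - 3)"
    by (intro mult_mono) auto
  then have "1 < (4 * real g - 3)\<^sup>2"
    by (simp add: power2_eq_square)
  then have "0 < Y"
    by (simp add: Y_def)
  then have positive: "0 < (if even j then 4 * real g - 2 else Y)" for j :: nat
    using assms by simp
  have "0 < Nside g" "\<And>i j. 0 \<le> pq_transition_entry g i j"
    using assms by (simp_all add: Nside_def pq_transition_entry_def)
  note spectral = spectral_radius_of_positive_eigenvector[OF this positive
      pq_transition_eigen_equation[OF assms, folded Y_def]]
  show ?thesis
    using markov_partition_fbar_PQ[OF assms] spectral
    unfolding trans_mat_fbar_PQ[OF assms] Let_def Y_def by blast
qed

end
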